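(* Let $t_1\ge 0$, let $t_2=0$ or $t_2\ge 2$, and let $t_3\ge 0$ be integers. Then $\rho(F_1(t_1,t_2,t_3))<\rho(F_0(t_1+1,t_2+1,t_3))$. (Both graphs have the same number of edges, namely $3t_1+2t_2+2t_3+7$ if $t_3\ge1$ and $3t_1+2t_2+5$ if $t_3=0$.)
   Context: $\rho(G)$ denotes the largest eigenvalue of the adjacency matrix of $G$. For integers $t_1,t_2,t_3\ge 0$, the graph $F_0(t_1,t_2,t_3)$ is defined as follows. It has a central vertex $u^*$. (a) For each $i=1,\dots,t_1$ there are two vertices $a_i,b_i$ forming a triangle $u^*a_ib_i$. (b) If $t_2\ge 1$, there are vertices $v,u_1,\dots,u_{t_2}$ with each $u_j$ adjacent to both $u^*$ and $v$ (so these form a $K_{2,t_2}$ in which $u^*$ is a vertex of the 2-element side). (c) If $t_3\ge 1$, there are vertices $v_1',v_2'$, both adjacent to $u^*$, and vertices $v_1,\dots,v_{t_3}$, each adjacent to both $v_1'$ and $v_2'$ (so these form a $K_{2,t_3+1}$ attached at the vertex $u^*$ of its $(t_3+1)$-element side). There are no other vertices or edges; the three parts share only $u^*$. Thus $F_0(t_1,t_2,t_3)$ has $3t_1+2t_2$ edges if $t_3=0$ and $3t_1+2t_2+2t_3+2$ edges if $t_3\ge1$. The graph $F_1(t_1,t_2,t_3)$ is obtained from $F_0(t_1,t_2,t_3)$ by adding four new vertices $w_1,w_2,w_3,w_4$ and the edges $u^*w_3,w_3w_1,w_1w_2,w_2w_4,w_4u^*$, i.e. attaching a 5-cycle at $u^*$.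 *)

theory Defs
  imports Complex_Main
begin

text \<open>Finite simple graphs given by a finite vertex set and a set of edges, each edge
  recorded as an ordered pair (the graph is undirected: adjacency is the symmetric closure).\<close>

type_synonym 'a graph = "'a set \<times> ('a \<times> 'a) set"

definition verts :: "'a graph \<Rightarrow> 'a set" where "verts G = fst G"
definition edges :: "'a graph \<Rightarrow> ('a \<times> 'a) set" where "edges G = snd G"

definition adj :: "'a graph \<Rightarrow> 'a \<Rightarrow> 'a \<Rightarrow> real" where
  "adj G x y = (if (x, y) \<in> edges G \<or> (y, x) \<in> edges G then 1 else 0)"

definition adj_eigenvalue :: "'a graph \<Rightarrow> real \<Rightarrow> bool" where
  "adj_eigenvalue G mu \<longleftrightarrow>
     (\<exists>x :: 'a \<Rightarrow> real. (\<exists>v\<in>verts G. x v \<noteq> 0) \<and>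
        (\<forall>v\<in>verts G. (\<Sum>w\<in>verts G. adj G v w * x w) = mu * x v))"

definition rho :: "'a graph \<Rightarrow> real" where
  "rho G = Max {mu. adj_eigenvalue G mu}"

datatype vtx = Ustar | Av nat | Bv nat | Vv | Uv nat | V1' | V2' | Vk nat | Wv nat

definition F0 :: "nat \<Rightarrow> nat \<Rightarrow> nat \<Rightarrow> vtx graph" where
  "F0 t1 t2 t3 =
    ({Ustar} \<union> Av ` {1..t1} \<union> Bv ` {1..t1}
       \<union> (if t2 \<ge> 1 then {Vv} \<union> Uv ` {1..t2} else {})
       \<union> (if t3 \<ge> 1 then {V1', V2'} \<union> Vk ` {1..t3} else {}),
     (\<Union>i\<in>{1..t1}. {(Ustar, Av i), (Ustar, Bv i), (Av i, Bv i)})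
       \<union> (if t2 \<ge> 1 then (\<Union>j\<in>{1..t2}. {(Ustar, Uv j), (Vv, Uv j)}) else {})
       \<union> (if t3 \<ge> 1 then {(Ustar, V1'), (Ustar, V2')}
            \<union> (\<Union>k\<in>{1..t3}. {(V1', Vk k), (V2', Vk k)}) else {}))"

definition F1 :: "nat \<Rightarrow> nat \<Rightarrow> nat \<Rightarrow> vtx graph" where
  "F1 t1 t2 t3 =
    (verts (F0 t1 t2 t3) \<union> {Wv 1, Wv 2, Wv 3, Wv 4},
     edges (F0 t1 t2 t3) \<union>
       {(Ustar, Wv 3), (Wv 3, Wv 1), (Wv 1, Wv 2), (Wv 2, Wv 4), (Wv 4, Ustar)})"

end

theory Submission
  imports Defs "HOL-Library.Function_Algebras"
begin

text \<open>Fix l beyond the poles and let y be the positive vector that satisfies the eigenvalue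
  equation (A y)(v) = l y(v) at every vertex v other than u*, normalised by y(u*) = 1. At u* the
  equation becomes hub_sum l = l for F0, and hub_sum l + pentagon_sum l = l for F1, the 5-cycle
  contributing 2(l - 1)/(l^2 - l - 1). By the intermediate value theorem F0(t1+1, t2+1, t3) has an
  eigenvalue c > 2 with eigenvector y, so its spectral radius is at least c. Passing to F1(t1, t2, t3)
  trades a triangle and a path u*-u-v for the 5-cycle, which strictly lowers the hub sum at c; by
  continuity, for some l < c the vector y satisfies A y \<le> l y on F1, and a positive such vector
  bounds every eigenvalue of F1 by l. As rho is defined as a maximum, we also need that a finite
  graph has finitely many eigenvalues (eigenvectors of distinct eigenvalues are orthogonal) and
  that F1 has one, namely (sqrt 5 - 1)/2.\<close>

interpretation fun_space: vector_space "\<lambda>(c::real) (f::'a \<Rightarrow> real) x. c * f x"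
  by unfold_locales (auto simp: fun_eq_iff algebra_simps)

lemma sum_fun_apply: "(\<Sum>b\<in>B. (g b :: 'a \<Rightarrow> real)) v = (\<Sum>b\<in>B. g b v)"
  by (induction B rule: infinite_finite_induct) auto

lemma orthogonal_family_independent:
  fixes B :: "('a \<Rightarrow> real) set"
  assumes "finite B"
    and nonzero: "\<And>b. b \<in> B \<Longrightarrow> (\<Sum>v\<in>V. b v * b v) \<noteq> 0"
    and orth: "\<And>b b'. b \<in> B \<Longrightarrow> b' \<in> B \<Longrightarrow> b \<noteq> b' \<Longrightarrow> (\<Sum>v\<in>V. b v * b' v) = 0"
  shows "fun_space.independent B"
proof (rule fun_space.independent_if_scalars_zero[OF \<open>finite B\<close>])
  fix f b
  assume comb: "(\<Sum>x\<in>B. (\<lambda>v. f x * x v)) = 0" and b: "b \<in> B"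
  have "0 = (\<Sum>v\<in>V. b v * (\<Sum>x\<in>B. f x * x v))"
    using fun_cong[OF comb] by (simp add: sum_fun_apply)
  also have "\<dots> = (\<Sum>v\<in>V. \<Sum>x\<in>B. f x * (x v * b v))"
    by (simp add: sum_distrib_left mult_ac)
  also have "\<dots> = (\<Sum>x\<in>B. f x * (\<Sum>v\<in>V. x v * b v))"
    by (subst sum.swap) (simp add: sum_distrib_left)
  also have "\<dots> = f b * (\<Sum>v\<in>V. b v * b v)"
    using b orth \<open>finite B\<close> by (subst sum.remove[of _ b]) (auto intro!: sum.neutral)
  finally show "f b = 0"
    using nonzero[OF b] by simp
qed

lemma span_functions_supported_on:
  assumes "finite V" and "\<forall>v. v \<notin> V \<longrightarrow> b v = 0"
  shows "b \<in> fun_space.span ((\<lambda>u v. if v = u then 1 else 0) ` V)"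
proof -
  have "b = (\<Sum>u\<in>V. (\<lambda>v. b u * (if v = u then 1 else 0)))"
    using assms by (auto simp: fun_eq_iff sum_fun_apply if_distrib cong: if_cong)
  also have "\<dots> \<in> fun_space.span ((\<lambda>u v. if v = u then 1 else 0) ` V)"
    by (intro fun_space.span_sum fun_space.span_scale fun_space.span_base) auto
  finally show ?thesis .
qed

lemma card_orthogonal_family_le:
  fixes B :: "('a \<Rightarrow> real) set"
  assumes "finite V" "finite B"
    and "\<And>b. b \<in> B \<Longrightarrow> (\<forall>v. v \<notin> V \<longrightarrow> b v = 0) \<and> (\<Sum>v\<in>V. b v * b v) \<noteq> 0"
    and "\<And>b b'. b \<in> B \<Longrightarrow> b' \<in> B \<Longrightarrow> b \<noteq> b' \<Longrightarrow> (\<Sum>v\<in>V. b v * b' v) = 0"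
  shows "card B \<le> card V"
proof -
  let ?T = "(\<lambda>u v. if v = u then 1 else 0 :: real) ` V"
  have "fun_space.independent B"
  proof (rule orthogonal_family_independent[OF assms(2)])
    show "(\<Sum>v\<in>V. b v * b v) \<noteq> 0" if "b \<in> B" for b
      using assms(3)[OF that] by (rule conjunct2)
  qed (rule assms(4))
  moreover have "B \<subseteq> fun_space.span ?T"
  proof
    show "b \<in> fun_space.span ?T" if "b \<in> B" for b
      using assms(3)[OF that] by (intro span_functions_supported_on[OF \<open>finite V\<close>]) blast
  qed
  ultimately have "finite B \<and> card B \<le> card ?T"
    by (rule fun_space.independent_span_bound[OF finite_imageI[OF \<open>finite V\<close>]])
  then have "card B \<le> card ?T" ..
  also have "\<dots> \<le> card V"
    by (rule card_image_le[OF \<open>finite V\<close>])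
  finally show ?thesis .
qed

lemma adj_sym: "adj G v w = adj G w v"
  unfolding adj_def by auto

lemma adj_nonneg: "adj G v w \<ge> 0"
  unfolding adj_def by auto

lemma adj_eigenvectors_orthogonal:
  assumes "\<forall>v\<in>verts G. (\<Sum>w\<in>verts G. adj G v w * x w) = mu * x v"
    and "\<forall>v\<in>verts G. (\<Sum>w\<in>verts G. adj G v w * z w) = nu * z v"
    and "mu \<noteq> nu"
  shows "(\<Sum>v\<in>verts G. x v * z v) = 0"
proof -
  let ?V = "verts G"
  have "mu * (\<Sum>v\<in>?V. x v * z v) = (\<Sum>v\<in>?V. (\<Sum>w\<in>?V. adj G v w * x w) * z v)"
    using assms(1) by (simp add: sum_distrib_left mult.assoc)
  also have "\<dots> = (\<Sum>v\<in>?V. \<Sum>w\<in>?V. adj G v w * x w * z v)"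
    by (simp add: sum_distrib_right)
  also have "\<dots> = (\<Sum>w\<in>?V. x w * (\<Sum>v\<in>?V. adj G w v * z v))"
    by (subst sum.swap) (simp add: sum_distrib_left adj_sym mult_ac)
  also have "\<dots> = nu * (\<Sum>v\<in>?V. x v * z v)"
    using assms(2) by (simp add: sum_distrib_left mult_ac)
  finally show ?thesis
    using assms(3) by simp
qed

lemma adj_eigenvalue_supported_eigenvector:
  "adj_eigenvalue G mu \<Longrightarrow> \<exists>x. (\<forall>v. v \<notin> verts G \<longrightarrow> x v = 0) \<and> (\<exists>v\<in>verts G. x v \<noteq> 0)
     \<and> (\<forall>v\<in>verts G. (\<Sum>w\<in>verts G. adj G v w * x w) = mu * x v)"
proof -
  assume "adj_eigenvalue G mu"
  then obtain x where "\<exists>v\<in>verts G. x v \<noteq> 0" "\<forall>v\<in>verts G. (\<Sum>w\<in>verts G. adj G v w * x w) = mu * x v"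
    unfolding adj_eigenvalue_def by blast
  then show ?thesis
    by (intro exI[of _ "\<lambda>v. if v \<in> verts G then x v else 0"]) auto
qed

lemma finite_adj_eigenvalues:
  assumes "finite (verts G)"
  shows "finite {mu. adj_eigenvalue G mu}"
proof (rule ccontr)
  define V where "V = verts G"
  assume "infinite {mu. adj_eigenvalue G mu}"
  then obtain S where S: "S \<subseteq> {mu. adj_eigenvalue G mu}" "finite S" "card S = card V + 1"
    using infinite_arbitrarily_large by blast
  have "\<forall>mu\<in>S. \<exists>x. (\<forall>v. v \<notin> V \<longrightarrow> x v = 0) \<and> (\<exists>v\<in>V. x v \<noteq> 0)
      \<and> (\<forall>v\<in>V. (\<Sum>w\<in>V. adj G v w * x w) = mu * x v)"
    using S(1) adj_eigenvalue_supported_eigenvector unfolding V_def by blast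
  then obtain x where x: "\<And>mu. mu \<in> S \<Longrightarrow> (\<forall>v. v \<notin> V \<longrightarrow> x mu v = 0) \<and> (\<exists>v\<in>V. x mu v \<noteq> 0)
      \<and> (\<forall>v\<in>V. (\<Sum>w\<in>V. adj G v w * x mu w) = mu * x mu v)"
    by metis
  have norm: "(\<Sum>v\<in>V. x mu v * x mu v) \<noteq> 0" if "mu \<in> S" for mu
    using x[OF that] assms unfolding V_def by (subst sum_nonneg_eq_0_iff) auto
  have orth: "(\<Sum>v\<in>V. x mu v * x nu v) = 0" if "mu \<in> S" "nu \<in> S" "mu \<noteq> nu" for mu nu
    using x[OF that(1)] x[OF that(2)] that(3) unfolding V_def by (intro adj_eigenvectors_orthogonal) auto
  have "inj_on x S"
  proof (rule inj_onI, rule ccontr)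
    fix mu nu
    assume "mu \<in> S" "nu \<in> S" "x mu = x nu" "mu \<noteq> nu"
    then have "(\<Sum>v\<in>V. x mu v * x mu v) = 0"
      using orth[of mu nu] by simp
    then show False
      using norm \<open>mu \<in> S\<close> by blast
  qed
  then have "card S = card (x ` S)"
    by (simp add: card_image)
  also have "\<dots> \<le> card V"
  proof (rule card_orthogonal_family_le)
    show "finite V" "finite (x ` S)"
      using assms S(2) unfolding V_def by auto
  next
    show "(\<forall>v. v \<notin> V \<longrightarrow> b v = 0) \<and> (\<Sum>v\<in>V. b v * b v) \<noteq> 0" if "b \<in> x ` S" for b
      using that x norm by blast
    show "(\<Sum>v\<in>V. b v * b' v) = 0" if "b \<in> x ` S" "b' \<in> x ` S" "b \<noteq> b'" for b b'
      using that orth by blast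
  qed
  finally show False
    using S(3) by simp
qed

lemma adj_eigenvalue_abs_le:
  assumes "finite (verts G)" and pos: "\<forall>v\<in>verts G. y v > 0"
    and sub: "\<forall>v\<in>verts G. (\<Sum>w\<in>verts G. adj G v w * y w) \<le> l * y v"
    and "adj_eigenvalue G mu"
  shows "\<bar>mu\<bar> \<le> l"
proof -
  define V where "V = verts G"
  obtain x where "\<exists>v\<in>V. x v \<noteq> 0" and eigen: "\<forall>v\<in>V. (\<Sum>w\<in>V. adj G v w * x w) = mu * x v"
    using assms(4) by (auto simp: adj_eigenvalue_def V_def)
  then obtain v1 where v1: "v1 \<in> V" "x v1 \<noteq> 0"
    by blast
  define r where "r v = \<bar>x v\<bar> / y v" for v
  define m where "m = Max (r ` V)"
  have "m \<in> r ` V"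
    unfolding m_def using assms(1) v1(1) by (intro Max_in) (auto simp: V_def)
  then obtain v0 where v0: "v0 \<in> V" "r v0 = m"
    by blast
  have r_le: "r v \<le> m" if "v \<in> V" for v
    unfolding m_def using assms(1) that by (intro Max_ge) (auto simp: V_def)
  have "r v1 > 0"
    using v1 pos by (simp add: r_def V_def)
  with r_le[OF v1(1)] have "m > 0"
    by simp
  have bound: "\<bar>x w\<bar> \<le> m * y w" if "w \<in> V" for w
    using r_le[OF that] that pos by (simp add: r_def V_def divide_le_eq)
  have x0: "\<bar>x v0\<bar> = m * y v0"
    using v0 pos by (auto simp: r_def V_def)
  have "\<bar>mu\<bar> * \<bar>x v0\<bar> = \<bar>\<Sum>w\<in>V. adj G v0 w * x w\<bar>"
    using eigen v0(1) by (simp add: abs_mult)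
  also have "\<dots> \<le> (\<Sum>w\<in>V. \<bar>adj G v0 w * x w\<bar>)"
    by (rule sum_abs)
  also have "\<dots> \<le> (\<Sum>w\<in>V. adj G v0 w * (m * y w))"
    by (intro sum_mono) (auto simp: abs_mult adj_nonneg bound mult_left_mono)
  also have "\<dots> = m * (\<Sum>w\<in>V. adj G v0 w * y w)"
    by (simp add: sum_distrib_left mult.left_commute)
  also have "\<dots> \<le> m * (l * y v0)"
    using sub v0(1) \<open>m > 0\<close> by (intro mult_left_mono) (auto simp: V_def)
  also have "\<dots> = l * \<bar>x v0\<bar>"
    using x0 by simp
  finally have "\<bar>mu\<bar> * \<bar>x v0\<bar> \<le> l * \<bar>x v0\<bar>" .
  moreover have "\<bar>x v0\<bar> > 0"
    using x0 \<open>m > 0\<close> pos v0(1) by (simp add: V_def)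
  ultimately show ?thesis
    by simp
qed

lemma adj_eigenvalue_le_rho:
  assumes "finite (verts G)" "adj_eigenvalue G mu"
  shows "mu \<le> rho G"
  unfolding rho_def using assms by (intro Max_ge finite_adj_eigenvalues) auto

lemma rho_le_if_positive_subeigenvector:
  assumes "finite (verts G)" "adj_eigenvalue G mu" "\<forall>v\<in>verts G. y v > 0"
    and "\<forall>v\<in>verts G. (\<Sum>w\<in>verts G. adj G v w * y w) \<le> l * y v"
  shows "rho G \<le> l"
proof -
  have "rho G \<in> {mu. adj_eigenvalue G mu}"
    unfolding rho_def using assms(1,2) by (intro Max_in finite_adj_eigenvalues) auto
  then show ?thesis
    using adj_eigenvalue_abs_le[OF assms(1,3,4)] by force
qed

definition neighbours :: "'a graph \<Rightarrow> 'a \<Rightarrow> 'a set" where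
  "neighbours G v = {w \<in> verts G. (v, w) \<in> edges G \<or> (w, v) \<in> edges G}"

lemma adj_sum_eq_neighbours_sum:
  "finite (verts G) \<Longrightarrow> (\<Sum>w\<in>verts G. adj G v w * x w) = (\<Sum>w\<in>neighbours G v. x w)"
  unfolding neighbours_def adj_def by (simp add: sum.inter_filter) (rule sum.cong, auto)

lemma finite_verts_F0: "finite (verts (F0 t1 t2 t3))"
  by (simp add: F0_def verts_def)

lemma finite_verts_F1: "finite (verts (F1 t1 t2 t3))"
  by (simp add: F1_def F0_def verts_def)

lemma Ustar_in_verts_F0: "Ustar \<in> verts (F0 t1 t2 t3)"
  by (simp add: F0_def verts_def)

lemma Wv_notin_verts_F0: "Wv n \<notin> verts (F0 t1 t2 t3)"
  by (auto simp: F0_def verts_def)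

lemma verts_F1: "verts (F1 t1 t2 t3) = verts (F0 t1 t2 t3) \<union> {Wv 1, Wv 2, Wv 3, Wv 4}"
  by (simp add: F1_def verts_def)

definition hub_neighbours :: "nat \<Rightarrow> nat \<Rightarrow> nat \<Rightarrow> vtx set" where
  "hub_neighbours t1 t2 t3 = Av ` {1..t1} \<union> Bv ` {1..t1} \<union> (if t2 \<ge> 1 then Uv ` {1..t2} else {})
     \<union> (if t3 \<ge> 1 then {V1', V2'} else {})"

lemma neighbours_F0_Ustar: "neighbours (F0 t1 t2 t3) Ustar = hub_neighbours t1 t2 t3"
  by (auto simp: neighbours_def hub_neighbours_def F0_def verts_def edges_def)

lemma neighbours_F1_Ustar:
  "neighbours (F1 t1 t2 t3) Ustar = hub_neighbours t1 t2 t3 \<union> {Wv 3, Wv 4}"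
  by (auto simp: neighbours_def hub_neighbours_def F1_def F0_def verts_def edges_def)

lemma neighbours_F1_pentagon:
  "neighbours (F1 t1 t2 t3) (Wv 1) = {Wv 3, Wv 2}" "neighbours (F1 t1 t2 t3) (Wv 2) = {Wv 1, Wv 4}"
  "neighbours (F1 t1 t2 t3) (Wv 3) = {Ustar, Wv 1}" "neighbours (F1 t1 t2 t3) (Wv 4) = {Wv 2, Ustar}"
  by (auto simp: neighbours_def F1_def F0_def verts_def edges_def)

lemma Wv_notin_edges_F0: "(a, b) \<in> edges (F0 t1 t2 t3) \<Longrightarrow> a \<noteq> Wv n \<and> b \<noteq> Wv n"
  by (auto simp: F0_def edges_def split: if_splits)

lemma neighbours_F1_eq_F0:
  assumes "v \<in> verts (F0 t1 t2 t3)" "v \<noteq> Ustar"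
  shows "neighbours (F1 t1 t2 t3) v = neighbours (F0 t1 t2 t3) v"
proof (rule set_eqI)
  fix w
  have "v \<notin> {Ustar, Wv 1, Wv 2, Wv 3, Wv 4}"
    using assms Wv_notin_verts_F0 by auto
  then have edge_iff: "(v, w) \<in> edges (F1 t1 t2 t3) \<longleftrightarrow> (v, w) \<in> edges (F0 t1 t2 t3)"
    "(w, v) \<in> edges (F1 t1 t2 t3) \<longleftrightarrow> (w, v) \<in> edges (F0 t1 t2 t3)"
    by (auto simp: F1_def edges_def)
  have "w \<notin> {Wv 1, Wv 2, Wv 3, Wv 4}" if "(v, w) \<in> edges (F0 t1 t2 t3) \<or> (w, v) \<in> edges (F0 t1 t2 t3)"
    using that Wv_notin_edges_F0 by fastforce
  then show "w \<in> neighbours (F1 t1 t2 t3) v \<longleftrightarrow> w \<in> neighbours (F0 t1 t2 t3) v"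
    unfolding neighbours_def verts_F1 using edge_iff by auto
qed

definition hub_sum :: "nat \<Rightarrow> nat \<Rightarrow> nat \<Rightarrow> real \<Rightarrow> real" where
  "hub_sum t1 t2 t3 l = 2 * real t1 / (l - 1) + real t2 * l / (l^2 - real t2)
     + (if t3 = 0 then 0 else 2 * l / (l^2 - 2 * real t3))"

definition pentagon_sum :: "real \<Rightarrow> real" where
  "pentagon_sum l = 2 * (l - 1) / (l^2 - l - 1)"

lemma pentagon_denominator_pos: "l > 2 \<Longrightarrow> l^2 - l - 1 > (0 :: real)"
  using mult_strict_mono[of 2 l 1 "l - 1"] by (simp add: power2_eq_square algebra_simps)

definition test_vector :: "nat \<Rightarrow> nat \<Rightarrow> real \<Rightarrow> vtx \<Rightarrow> real" where
  "test_vector t2 t3 l v = (case v of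
      Ustar \<Rightarrow> 1
    | Av i \<Rightarrow> 1 / (l - 1) | Bv i \<Rightarrow> 1 / (l - 1)
    | Vv \<Rightarrow> real t2 / (l^2 - real t2) | Uv j \<Rightarrow> l / (l^2 - real t2)
    | V1' \<Rightarrow> l / (l^2 - 2 * real t3) | V2' \<Rightarrow> l / (l^2 - 2 * real t3)
    | Vk k \<Rightarrow> 2 / (l^2 - 2 * real t3)
    | Wv n \<Rightarrow> (if n = 1 \<or> n = 2 then 1 else l - 1) / (l^2 - l - 1))"

lemma test_vector_Ustar [simp]: "test_vector t2 t3 l Ustar = 1"
  by (simp add: test_vector_def)

lemma sum_image_const:
  assumes "inj f" "\<And>a. a \<in> {1..n} \<Longrightarrow> g (f a) = (c :: real)"
  shows "(\<Sum>w\<in>f ` {1..n}. g w) = real n * c"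
  using assms by (simp add: sum.reindex inj_on_def)

lemma sum_test_vector_hub_neighbours:
  "(\<Sum>w\<in>hub_neighbours t1 t2 t3. test_vector t2 t3 l w) = hub_sum t1 t2 t3 l"
proof -
  let ?y = "test_vector t2 t3 l"
  let ?A = "Av ` {1..t1}" and ?B = "Bv ` {1..t1}" and ?C = "if t2 \<ge> 1 then Uv ` {1..t2} else {}"
    and ?D = "if t3 \<ge> 1 then {V1', V2'} else {}"
  have "(\<Sum>w\<in>?A. ?y w) = real t1 / (l - 1)" "(\<Sum>w\<in>?B. ?y w) = real t1 / (l - 1)"
    by (subst sum_image_const[where c = "1 / (l - 1)"]; simp add: inj_def test_vector_def)+
  moreover have "(\<Sum>w\<in>?C. ?y w) = real t2 * l / (l^2 - real t2)"
  proof (cases "t2 = 0")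
    case False
    then show ?thesis
      using sum_image_const[of Uv t2 ?y "l / (l^2 - real t2)"] by (simp add: inj_def test_vector_def)
  qed simp
  moreover have "(\<Sum>w\<in>?D. ?y w) = (if t3 = 0 then 0 else 2 * l / (l^2 - 2 * real t3))"
    by (simp add: test_vector_def)
  moreover have "(\<Sum>w\<in>?A \<union> ?B \<union> ?C \<union> ?D. ?y w)
      = (\<Sum>w\<in>?A. ?y w) + (\<Sum>w\<in>?B. ?y w) + (\<Sum>w\<in>?C. ?y w) + (\<Sum>w\<in>?D. ?y w)"
    by (subst sum.union_disjoint; (subst sum.union_disjoint)?; (subst sum.union_disjoint)?) auto
  ultimately show ?thesis
    unfolding hub_neighbours_def hub_sum_def by simp
qed

lemma neighbours_F0:
  "i \<in> {1..t1} \<Longrightarrow> neighbours (F0 t1 t2 t3) (Av i) = {Ustar, Bv i}"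
  "i \<in> {1..t1} \<Longrightarrow> neighbours (F0 t1 t2 t3) (Bv i) = {Ustar, Av i}"
  "t2 \<ge> 1 \<Longrightarrow> neighbours (F0 t1 t2 t3) Vv = Uv ` {1..t2}"
  "j \<in> {1..t2} \<Longrightarrow> neighbours (F0 t1 t2 t3) (Uv j) = {Ustar, Vv}"
  "t3 \<ge> 1 \<Longrightarrow> neighbours (F0 t1 t2 t3) V1' = insert Ustar (Vk ` {1..t3})"
  "t3 \<ge> 1 \<Longrightarrow> neighbours (F0 t1 t2 t3) V2' = insert Ustar (Vk ` {1..t3})"
  "k \<in> {1..t3} \<Longrightarrow> neighbours (F0 t1 t2 t3) (Vk k) = {V1', V2'}"
  by (auto simp: neighbours_def F0_def verts_def edges_def)

lemma F0_neighbours_sum_test_vector: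
  assumes l: "l > 1" "l^2 > real t2" "l^2 > 2 * real t3"
    and v: "v \<in> verts (F0 t1 t2 t3)" "v \<noteq> Ustar"
  shows "(\<Sum>w\<in>neighbours (F0 t1 t2 t3) v. test_vector t2 t3 l w) = l * test_vector t2 t3 l v"
proof -
  let ?y = "test_vector t2 t3 l"
  have nonzero: "l - 1 \<noteq> 0" "l^2 - real t2 \<noteq> 0" "l^2 - 2 * real t3 \<noteq> 0"
    using l by auto
  have sum_Uv: "(\<Sum>w\<in>Uv ` {1..t2}. ?y w) = real t2 * (l / (l^2 - real t2))"
    by (rule sum_image_const) (auto simp: inj_def test_vector_def)
  have "(\<Sum>w\<in>Vk ` {1..t3}. ?y w) = real t3 * (2 / (l^2 - 2 * real t3))"
    by (rule sum_image_const) (auto simp: inj_def test_vector_def)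
  then have "(\<Sum>w\<in>insert Ustar (Vk ` {1..t3}). ?y w) = 1 + real t3 * (2 / (l^2 - 2 * real t3))"
    by (simp add: image_iff)
  also have "\<dots> = l * (l / (l^2 - 2 * real t3))"
    using nonzero by (simp add: field_simps power2_eq_square)
  finally have sum_V12: "(\<Sum>w\<in>insert Ustar (Vk ` {1..t3}). ?y w) = l * (l / (l^2 - 2 * real t3))" .
  consider (A) i where "v = Av i" "i \<in> {1..t1}" | (B) i where "v = Bv i" "i \<in> {1..t1}"
    | (V) "v = Vv" "t2 \<ge> 1" | (U) j where "v = Uv j" "j \<in> {1..t2}"
    | (V1) "v = V1'" "t3 \<ge> 1" | (V2) "v = V2'" "t3 \<ge> 1" | (K) k where "v = Vk k" "k \<in> {1..t3}"
    using v by (auto simp: F0_def verts_def split: if_splits)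
  then show ?thesis
  proof cases
    case (A i)
    then show ?thesis
      using nonzero by (simp add: neighbours_F0 test_vector_def field_simps)
  next
    case (B i)
    then show ?thesis
      using nonzero by (simp add: neighbours_F0 test_vector_def field_simps)
  next
    case V
    then show ?thesis
      using sum_Uv by (simp add: neighbours_F0 test_vector_def)
  next
    case (U j)
    then show ?thesis
      using nonzero by (simp add: neighbours_F0 test_vector_def field_simps power2_eq_square)
  next
    case V1
    then show ?thesis
      using sum_V12 by (simp add: neighbours_F0 test_vector_def)
  next
    case V2
    then show ?thesis
      using sum_V12 by (simp add: neighbours_F0 test_vector_def)
  next
    case (K k)
    then show ?thesis
      by (simp add: neighbours_F0 test_vector_def)
  qed
qed

lemma F0_eigenvalue_if_hub_sum_fixed:
  assumes "l > 1" "l^2 > real t2" "l^2 > 2 * real t3" "hub_sum t1 t2 t3 l = l"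
  shows "adj_eigenvalue (F0 t1 t2 t3) l"
  unfolding adj_eigenvalue_def
proof (intro exI[of _ "test_vector t2 t3 l"] conjI ballI)
  show "\<exists>v\<in>verts (F0 t1 t2 t3). test_vector t2 t3 l v \<noteq> 0"
    using Ustar_in_verts_F0 by force
  fix v
  assume "v \<in> verts (F0 t1 t2 t3)"
  then show "(\<Sum>w\<in>verts (F0 t1 t2 t3). adj (F0 t1 t2 t3) v w * test_vector t2 t3 l w)
      = l * test_vector t2 t3 l v"
    using assms F0_neighbours_sum_test_vector[OF assms(1-3)]
    by (cases "v = Ustar")
      (simp_all add: adj_sum_eq_neighbours_sum finite_verts_F0 neighbours_F0_Ustar
        sum_test_vector_hub_neighbours)
qed

lemma F1_neighbours_sum_test_vector:
  assumes l: "l > 1" "l^2 > real t2" "l^2 > 2 * real t3" "l^2 - l - 1 \<noteq> 0"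
    and v: "v \<in> verts (F1 t1 t2 t3)"
  shows "(\<Sum>w\<in>neighbours (F1 t1 t2 t3) v. test_vector t2 t3 l w)
    = (if v = Ustar then hub_sum t1 t2 t3 l + pentagon_sum l else l * test_vector t2 t3 l v)"
proof -
  let ?y = "test_vector t2 t3 l"
  have cycle: "1 + 1 / (l^2 - l - 1) = l * ((l - 1) / (l^2 - l - 1))"
    using l(4) by (simp add: field_simps power2_eq_square)
  consider "v = Ustar" | "v \<in> verts (F0 t1 t2 t3)" "v \<noteq> Ustar"
    | "v = Wv 1" | "v = Wv 2" | "v = Wv 3" | "v = Wv 4"
    using v unfolding verts_F1 by blast
  then show ?thesis
  proof cases
    case 1
    have "(\<Sum>w\<in>hub_neighbours t1 t2 t3 \<union> {Wv 3, Wv 4}. ?y w)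
        = (\<Sum>w\<in>hub_neighbours t1 t2 t3. ?y w) + ?y (Wv 3) + ?y (Wv 4)"
      by (subst sum.union_disjoint) (auto simp: hub_neighbours_def)
    moreover have "?y (Wv 3) + ?y (Wv 4) = pentagon_sum l"
      by (simp add: test_vector_def pentagon_sum_def add_divide_distrib)
    ultimately show ?thesis
      using 1 by (simp add: neighbours_F1_Ustar sum_test_vector_hub_neighbours)
  next
    case 2
    then show ?thesis
      using F0_neighbours_sum_test_vector[OF l(1-3)] by (simp add: neighbours_F1_eq_F0)
  next
    case 3
    then show ?thesis
      unfolding 3 neighbours_F1_pentagon by (simp add: test_vector_def add_divide_distrib[symmetric])
  next
    case 4
    then show ?thesis
      unfolding 4 neighbours_F1_pentagon by (simp add: test_vector_def add_divide_distrib[symmetric])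
  next
    case 5
    then show ?thesis
      using cycle by (simp add: neighbours_F1_pentagon test_vector_def)
  next
    case 6
    then show ?thesis
      using cycle by (simp add: neighbours_F1_pentagon test_vector_def)
  qed
qed

text \<open>This eigenvector of F1 lives on the 5-cycle and is antisymmetric under the reflection
  fixing u*; p is the golden-ratio eigenvalue (sqrt 5 - 1)/2 of the 5-cycle.\<close>

definition golden_vector :: "real \<Rightarrow> vtx \<Rightarrow> real" where
  "golden_vector p v = (case v of Wv n \<Rightarrow>
      if n = 1 then 1 else if n = 2 then -1 else if n = 3 then p + 1 else if n = 4 then - (p + 1) else 0
    | _ \<Rightarrow> 0)"

lemma F1_neighbours_sum_golden_vector:
  assumes p: "p * (p + 1) = 1" and v: "v \<in> verts (F1 t1 t2 t3)"
  shows "(\<Sum>w\<in>neighbours (F1 t1 t2 t3) v. golden_vector p w) = p * golden_vector p v"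
proof -
  let ?x = "golden_vector p"
  have x_F0: "?x v = 0" if "v \<in> verts (F0 t1 t2 t3)" for v
    using that Wv_notin_verts_F0 by (cases v) (auto simp: golden_vector_def)
  consider "v = Ustar" | "v \<in> verts (F0 t1 t2 t3)" "v \<noteq> Ustar"
    | "v = Wv 1" | "v = Wv 2" | "v = Wv 3" | "v = Wv 4"
    using v unfolding verts_F1 by blast
  then show ?thesis
  proof cases
    case 1
    have "(\<Sum>w\<in>hub_neighbours t1 t2 t3 \<union> {Wv 3, Wv 4}. ?x w)
        = (\<Sum>w\<in>hub_neighbours t1 t2 t3. ?x w) + ?x (Wv 3) + ?x (Wv 4)"
      by (subst sum.union_disjoint) (auto simp: hub_neighbours_def)
    moreover have "(\<Sum>w\<in>hub_neighbours t1 t2 t3. ?x w) = 0"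
      by (rule sum.neutral) (auto simp: hub_neighbours_def golden_vector_def)
    ultimately show ?thesis
      using 1 by (simp add: neighbours_F1_Ustar golden_vector_def)
  next
    case 2
    moreover have "(\<Sum>w\<in>neighbours (F0 t1 t2 t3) v. ?x w) = 0"
      by (rule sum.neutral) (simp add: neighbours_def x_F0)
    ultimately show ?thesis
      by (simp add: neighbours_F1_eq_F0 x_F0)
  next
    case 3
    show ?thesis
      unfolding 3 neighbours_F1_pentagon by (simp add: golden_vector_def)
  next
    case 4
    show ?thesis
      unfolding 4 neighbours_F1_pentagon by (simp add: golden_vector_def)
  next
    case 5
    show ?thesis
      unfolding 5 neighbours_F1_pentagon using p by (simp add: golden_vector_def)
  next
    case 6
    show ?thesis
      unfolding 6 neighbours_F1_pentagon using p by (simp add: golden_vector_def algebra_simps)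
  qed
qed

lemma F1_golden_eigenvalue: "adj_eigenvalue (F1 t1 t2 t3) ((sqrt 5 - 1) / 2)"
proof -
  define p :: real where "p = (sqrt 5 - 1) / 2"
  have "p * (p + 1) = 1"
    by (simp add: p_def field_simps)
  moreover have "Wv 1 \<in> verts (F1 t1 t2 t3)" "golden_vector p (Wv 1) \<noteq> 0"
    by (auto simp: verts_F1 golden_vector_def)
  ultimately show ?thesis
    unfolding adj_eigenvalue_def p_def[symmetric]
    by (intro exI[of _ "golden_vector p"])
      (auto simp: adj_sum_eq_neighbours_sum finite_verts_F1 F1_neighbours_sum_golden_vector)
qed

lemma test_vector_pos:
  assumes "l > 2" "l^2 > real t2" "l^2 > 2 * real t3" "v \<in> verts (F1 t1 t2 t3)"
  shows "test_vector t2 t3 l v > 0"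
proof -
  have "l^2 - l - 1 > 0"
    using assms(1) by (rule pentagon_denominator_pos)
  moreover have "t2 \<ge> 1" if "v = Vv"
    using assms(4) unfolding that verts_F1 by (auto simp: F0_def verts_def split: if_splits)
  ultimately show ?thesis
    using assms(1-3) by (cases v) (auto simp: test_vector_def)
qed

lemma rho_F1_le:
  assumes "l > 2" "l^2 > real t2" "l^2 > 2 * real t3" "hub_sum t1 t2 t3 l + pentagon_sum l \<le> l"
  shows "rho (F1 t1 t2 t3) \<le> l"
proof (rule rho_le_if_positive_subeigenvector[OF finite_verts_F1 F1_golden_eigenvalue])
  have "l^2 - l - 1 \<noteq> 0"
    using pentagon_denominator_pos[OF assms(1)] by simp
  then show "\<forall>v\<in>verts (F1 t1 t2 t3).
      (\<Sum>w\<in>verts (F1 t1 t2 t3). adj (F1 t1 t2 t3) v w * test_vector t2 t3 l w) \<le> l * test_vector t2 t3 l v"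
    using assms F1_neighbours_sum_test_vector[of l t2 t3]
    by (simp add: adj_sum_eq_neighbours_sum finite_verts_F1)
  show "\<forall>v\<in>verts (F1 t1 t2 t3). test_vector t2 t3 l v > 0"
    using assms(1-3) test_vector_pos by blast
qed

lemma pentagon_sum_lt:
  assumes "c > 2"
  shows "pentagon_sum c < 2 / (c - 1)"
proof -
  have E: "c^2 - c - 1 > 0"
    using assms by (rule pentagon_denominator_pos)
  have "2 * (c - 1) * (c - 1) < 2 * (c^2 - c - 1)"
    using assms by (simp add: power2_eq_square algebra_simps)
  then show ?thesis
    using E assms by (simp add: pentagon_sum_def divide_simps mult_ac)
qed

lemma hub_sum_add_pentagon_lt_hub_sum_Suc:
  assumes "c > 2" "c^2 > real t2 + 1" "c^2 > 2 * real t3"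
  shows "hub_sum t1 t2 t3 c + pentagon_sum c < hub_sum (Suc t1) (Suc t2) t3 c"
proof -
  have "real t2 * c / (c^2 - real t2) \<le> (real t2 + 1) * c / (c^2 - (real t2 + 1))"
    using assms by (intro frac_le) auto
  moreover have "2 * real (Suc t1) / (c - 1) = 2 * real t1 / (c - 1) + 2 / (c - 1)"
    by (simp add: add_divide_distrib[symmetric] algebra_simps)
  ultimately show ?thesis
    using pentagon_sum_lt[OF assms(1)] by (simp add: hub_sum_def algebra_simps)
qed

lemma hub_sum_gt_self_near_pole:
  assumes "t1 \<ge> 1" "t2 \<ge> 1" "a^2 = max (real t2 + 1) (2 * real t3 + 1)" "a > 0"
  shows "hub_sum t1 t2 t3 a > a"
proof -
  have "a > 1"
  proof (rule ccontr)
    assume "\<not> a > 1"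
    then have "a^2 \<le> 1"
      using assms(4) by (simp add: power_le_one)
    then show False
      using assms(2,3) by simp
  qed
  then have first: "2 * real t1 / (a - 1) > 0"
    using assms(1) by simp
  show ?thesis
  proof (cases "real t2 \<ge> 2 * real t3")
    case True
    then have "a^2 - real t2 = 1"
      using assms(3) by simp
    then have "real t2 * a / (a^2 - real t2) \<ge> a"
      using assms(2,4) by simp
    moreover have "(if t3 = 0 then 0 else 2 * a / (a^2 - 2 * real t3)) \<ge> 0"
      using assms(3,4) by simp
    ultimately show ?thesis
      using first by (simp add: hub_sum_def)
  next
    case False
    then have "t3 \<noteq> 0" "a^2 - 2 * real t3 = 1"
      using assms(3) by auto
    moreover have "real t2 * a / (a^2 - real t2) \<ge> 0"
      using assms(3,4) by simp
    ultimately show ?thesis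
      using first assms(4) by (simp add: hub_sum_def)
  qed
qed

lemma hub_sum_lt_self_far:
  assumes "b = 2 * real t1 + 2 * real t2 + 2 * real t3 + 4"
  shows "hub_sum t1 t2 t3 b < b"
proof -
  have b: "b \<ge> 4" "b - 1 \<ge> 2 * real t1" "b - real t2 \<ge> real t2 + 4" "b - 2 \<ge> 2 * real t3 + 2"
    using assms by auto
  have "2 * real t1 / (b - 1) \<le> 1"
    using b by (simp add: pos_divide_le_eq)
  moreover have "real t2 * b / (b^2 - real t2) < 1"
  proof -
    have "b * (b - real t2) \<ge> 1 * (real t2 + 4)"
      using b by (intro mult_mono) auto
    then have "real t2 * b < b^2 - real t2" "0 \<le> real t2 * b"
      using b by (simp_all add: power2_eq_square algebra_simps)
    then show ?thesis
      by (simp add: divide_less_eq)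
  qed
  moreover have "(if t3 = 0 then 0 else 2 * b / (b^2 - 2 * real t3)) < 1"
  proof -
    have "b * (b - 2) \<ge> 1 * (2 * real t3 + 2)"
      using b by (intro mult_mono) auto
    then have "2 * b < b^2 - 2 * real t3" "0 \<le> 2 * b"
      using b by (simp_all add: power2_eq_square algebra_simps)
    then show ?thesis
      by (simp add: divide_less_eq)
  qed
  ultimately show ?thesis
    using b(1) unfolding hub_sum_def by linarith
qed

lemma continuous_on_hub_sum:
  "continuous_on {l. l > 1 \<and> l^2 > real t2 \<and> l^2 > 2 * real t3} (hub_sum t1 t2 t3)"
  unfolding hub_sum_def by (cases "t3 = 0") (auto intro!: continuous_intros)

lemma gt_2_if_hub_sum_fixed:
  assumes "t1 \<ge> 1" "t2 \<ge> 1" "c > 1" "c^2 > real t2" "c^2 > 2 * real t3" "hub_sum t1 t2 t3 c = c"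
  shows "c > 2"
proof (rule ccontr)
  assume "\<not> c > 2"
  then have "2 * real t1 / (c - 1) \<ge> 2"
    using assms(1,3) by (simp add: pos_le_divide_eq)
  moreover have "real t2 * c / (c^2 - real t2) > 0"
    using assms(2-4) by simp
  moreover have "(if t3 = 0 then 0 else 2 * c / (c^2 - 2 * real t3)) \<ge> 0"
    using assms(3,5) by simp
  ultimately show False
    using assms(6) \<open>\<not> c > 2\<close> unfolding hub_sum_def by linarith
qed

lemma hub_sum_fixed_point_exists:
  assumes "t1 \<ge> 1" "t2 \<ge> 1"
  obtains c where "c > 2" "c^2 > real t2" "c^2 > 2 * real t3" "hub_sum t1 t2 t3 c = c"
proof -
  define m where "m = max (real t2 + 1) (2 * real t3 + 1)"
  define a where "a = sqrt m"
  define b where "b = 2 * real t1 + 2 * real t2 + 2 * real t3 + 4"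
  have "m \<ge> 2"
    using assms(2) by (simp add: m_def)
  then have a: "a^2 = m" "a > 1"
    by (simp_all add: a_def real_less_rsqrt)
  have dom: "l > 1 \<and> l^2 > real t2 \<and> l^2 > 2 * real t3" if "a \<le> l" for l
  proof -
    have "a^2 \<le> l^2"
      using that a(2) by (intro power_mono) auto
    then show ?thesis
      using that a by (auto simp: m_def)
  qed
  have "b \<ge> 1"
    by (simp add: b_def)
  have "m \<le> b"
    by (simp add: m_def b_def)
  also have "\<dots> \<le> b^2"
    using mult_left_mono[of 1 b b] \<open>b \<ge> 1\<close> by (simp add: power2_eq_square)
  finally have "a \<le> b"
    unfolding a_def using \<open>b \<ge> 1\<close> by (intro real_le_lsqrt) auto
  moreover have "a - hub_sum t1 t2 t3 a \<le> 0"
    using hub_sum_gt_self_near_pole[OF assms, of a t3] a by (simp add: m_def)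
  moreover have "0 \<le> b - hub_sum t1 t2 t3 b"
    using hub_sum_lt_self_far[OF b_def] by simp
  moreover have "continuous_on {a..b} (\<lambda>l. l - hub_sum t1 t2 t3 l)"
    using dom by (intro continuous_intros continuous_on_subset[OF continuous_on_hub_sum]) auto
  ultimately obtain c where "a \<le> c" "c - hub_sum t1 t2 t3 c = 0"
    using IVT'[of "\<lambda>l. l - hub_sum t1 t2 t3 l" a 0 b] by auto
  moreover from this have "c > 2"
    using dom[of c] by (intro gt_2_if_hub_sum_fixed[OF assms]) auto
  ultimately show ?thesis
    using dom[of c] that by auto
qed

lemma rho_F1_lt:
  assumes "c > 2" "c^2 > real t2" "c^2 > 2 * real t3" "hub_sum t1 t2 t3 c + pentagon_sum c < c"
  shows "rho (F1 t1 t2 t3) < c"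
proof -
  let ?g = "\<lambda>l. l - hub_sum t1 t2 t3 l - pentagon_sum l"
  have "c^2 - c - 1 \<noteq> 0"
    using pentagon_denominator_pos[OF assms(1)] by simp
  then have "(?g \<longlongrightarrow> ?g c) (at_left c)"
    using assms(1-3) unfolding hub_sum_def pentagon_sum_def
    by (cases "t3 = 0") (auto intro!: tendsto_intros)
  then have "eventually (\<lambda>l. ?g l > 0) (at_left c)"
    using assms(4) by (intro order_tendstoD) auto
  moreover have "eventually (\<lambda>l. l^2 > real t2 \<and> l^2 > 2 * real t3) (at_left c)"
  proof -
    have "((\<lambda>l. l^2) \<longlongrightarrow> c^2) (at_left c)"
      by (intro tendsto_intros)
    then show ?thesis
      using assms(2,3) by (intro eventually_conj order_tendstoD)
  qed
  moreover have "eventually (\<lambda>l. l \<in> {2<..<c}) (at_left c)"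
    using assms(1) by (rule eventually_at_left_real)
  ultimately have "eventually (\<lambda>l. ?g l > 0 \<and> l^2 > real t2 \<and> l^2 > 2 * real t3 \<and> l \<in> {2<..<c})
      (at_left c)"
    by eventually_elim blast
  then obtain l where l: "?g l > 0" "l^2 > real t2" "l^2 > 2 * real t3" "l \<in> {2<..<c}"
    using eventually_happens'[OF trivial_limit_at_left_real] by blast
  then have "rho (F1 t1 t2 t3) \<le> l"
    by (intro rho_F1_le) auto
  then show ?thesis
    using l(4) by simp
qed

theorem proposition4p2:
  fixes t1 t2 t3 :: nat
  assumes "t2 = 0 \<or> t2 \<ge> 2"
  shows "rho (F1 t1 t2 t3) < rho (F0 (t1 + 1) (t2 + 1) t3)"
proof -
  obtain c where c: "c > 2" "c^2 > real (Suc t2)" "c^2 > 2 * real t3" "hub_sum (Suc t1) (Suc t2) t3 c = c"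
    by (rule hub_sum_fixed_point_exists[of "Suc t1" "Suc t2" t3]) auto
  have "hub_sum t1 t2 t3 c + pentagon_sum c < c"
    using hub_sum_add_pentagon_lt_hub_sum_Suc[of c t2 t3 t1] c by simp
  then have "rho (F1 t1 t2 t3) < c"
    using c(1-3) by (intro rho_F1_lt) auto
  moreover have "c \<le> rho (F0 (Suc t1) (Suc t2) t3)"
    using c by (intro adj_eigenvalue_le_rho[OF finite_verts_F0] F0_eigenvalue_if_hub_sum_fixed) auto
  ultimately show ?thesis
    by simp
qed

end
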